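(* Let $A\in\mathbb{R}^{s\times n}$ have rank $s\le n$ and let $y\in(\ker A)^\perp$ be a unit vector. Then the vector $v=(A^\dagger)^Ty\in\mathbb{R}^s$ satisfies $$\|v\|=\left|\frac{\det A^{(y)}}{\det\tilde A}\right|=\frac{1}{\|(Ay)^\perp\|}.$$
   Context: $A^\dagger=A^T(AA^T)^{-1}$ is the Moore–Penrose inverse. $\tilde A\colon(\ker A)^\perp\to\mathbb{R}^s$ is the restriction of $A$; $A^{(y)}\colon(\mathbb{R}y\oplus\ker A)^\perp\to\operatorname{im}A^{(y)}$ is the restriction of $A$ to the orthogonal complement of $\mathbb{R}y\oplus\ker A$, viewed as a map onto its $(s-1)$-dimensional image. Determinants of linear maps between inner-product spaces of equal dimension are taken with respect to orthonormal bases (well defined up to sign). $(Ay)^\perp$ denotes the orthogonal projection of $Ay$ onto the orthogonal complement in $\mathbb{R}^s$ of $\operatorname{im}A^{(y)}$, so that $|\det\tilde A|=|\det A^{(y)}|\cdot\|(Ay)^\perp\|$. *)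

theory Defs
  imports "HOL-Analysis.Analysis"
begin

definition detn :: "nat \<Rightarrow> (nat \<Rightarrow> nat \<Rightarrow> real) \<Rightarrow> real" where
  "detn k M = (\<Sum>p | p permutes {..<k}. of_int (sign p) * (\<Prod>i<k. M i (p i)))"

definition onb :: "'a::euclidean_space set \<Rightarrow> nat \<Rightarrow> 'a" where
  "onb V = (SOME b. (\<forall>i<dim V. b i \<in> V) \<and>
                    (\<forall>i<dim V. \<forall>j<dim V. b i \<bullet> b j = (if i = j then 1 else 0)) \<and>
                    span (b ` {..<dim V}) = span V)"

text \<open>Absolute value of the determinant of a linear map f restricted to V, viewed as a map
  into W (dim V = dim W), computed with respect to orthonormal bases of V and W.\<close>
definition abs_det_restr ::
  "('a::euclidean_space \<Rightarrow> 'b::euclidean_space) \<Rightarrow> 'a set \<Rightarrow> 'b set \<Rightarrow> real" where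
  "abs_det_restr f V W = \<bar>detn (dim V) (\<lambda>i j. onb W i \<bullet> f (onb V j))\<bar>"

definition mat_ker :: "real^'n^'s \<Rightarrow> (real^'n) set" where
  "mat_ker A = {x. A *v x = 0}"

text \<open>Moore--Penrose inverse of a full row rank matrix: A^T (A A^T)^{-1}.\<close>
definition pinv :: "real^'n^'s \<Rightarrow> real^'s^'n" where
  "pinv A = transpose A ** matrix_inv (A ** transpose A)"

definition perp_part :: "'a::euclidean_space set \<Rightarrow> 'a \<Rightarrow> 'a" where
  "perp_part W x = (THE z. z \<in> orthogonal_comp W \<and> x - z \<in> W)"

end

theory Submission
  imports Defs Jordan_Normal_Form.Determinant
begin

(* Write R = (ker A)^perp, H = (Ry + ker A)^perp = R \<inter> y^perp, W = A H, and let p = (Ay)^perp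
  be the component of Ay orthogonal to W.  Extending orthonormal bases of H and W by y and by
  p/|p| gives orthonormal bases of R and of R^s in which the matrix of A is block upper
  triangular with corner entry p/|p| \<bullet> Ay = |p|, so |det A~| = |det A^(y)| |p|.
  On the other hand A^T v = y, i.e. v \<bullet> Ax = y \<bullet> x for all x: thus v is orthogonal to W and
  v \<bullet> p = v \<bullet> Ay = 1.  As W^perp is the line through p, |v| = 1/|p|. *)

no_notation Matrix.scalar_prod (infix "\<bullet>" 70)
hide_const (open) Matrix.orthogonal
hide_fact (open) Matrix.orthogonal_def

subsection \<open>Determinants of matrices given as functions on indices\<close>

lemma detn_eq_det: "detn k M = Determinant.det (Matrix.mat k k (\<lambda>(i, j). M i j))"
proof -
  have "Determinant.det (Matrix.mat k k (\<lambda>(i, j). M i j)) = (\<Sum>p\<in>{p. p permutes {0..<k}}.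
      signof p * (\<Prod>i = 0..<k. Matrix.mat k k (\<lambda>(i, j). M i j) $$ (i, p i)))"
    by (rule det_def') simp
  also have "\<dots> = detn k M"
    unfolding detn_def lessThan_atLeast0
  proof (intro sum.cong refl)
    fix p assume "p \<in> {p. p permutes {0..<k}}"
    then have "p i < k" if "i < k" for i
      using that permutes_in_image by fastforce
    then show "signof p * (\<Prod>i = 0..<k. Matrix.mat k k (\<lambda>(i, j). M i j) $$ (i, p i)) =
        of_int (sign p) * (\<Prod>i = 0..<k. M i (p i))"
      by (intro arg_cong2[where f = "(*)"] refl prod.cong) auto
  qed
  finally show ?thesis by simp
qed

lemma detn_cong:
  assumes "\<And>i j. i < k \<Longrightarrow> j < k \<Longrightarrow> M i j = M' i j"
  shows "detn k M = detn k M'"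
proof -
  have "Matrix.mat k k (\<lambda>(i, j). M i j) = Matrix.mat k k (\<lambda>(i, j). M' i j)"
    using assms by (intro eq_matI) auto
  then show ?thesis by (simp add: detn_eq_det)
qed

lemma detn_mult:
  "detn k (\<lambda>i j. \<Sum>l<k. F i l * G l j) = detn k F * detn k G"
proof -
  have "Matrix.mat k k (\<lambda>(i, j). \<Sum>l<k. F i l * G l j) =
      Matrix.mat k k (\<lambda>(i, j). F i j) * Matrix.mat k k (\<lambda>(i, j). G i j)"
    by (rule eq_matI) (auto simp: scalar_prod_def lessThan_atLeast0 intro!: sum.cong)
  then show ?thesis
    by (simp add: detn_eq_det det_mult[of _ k])
qed

lemma detn_last_row_zero:
  assumes "\<And>j. j < k \<Longrightarrow> N k j = 0"
  shows "detn (Suc k) N = detn k N * N k k"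
proof -
  let ?A1 = "Matrix.mat k k (\<lambda>(i, j). N i j)"
  let ?A2 = "Matrix.mat k 1 (\<lambda>(i, j). N i k)"
  let ?A4 = "Matrix.mat 1 1 (\<lambda>(i, j). N k k)"
  have blocks: "Matrix.mat (Suc k) (Suc k) (\<lambda>(i, j). N i j) = four_block_mat ?A1 ?A2 (0\<^sub>m 1 k) ?A4"
    using assms by (intro eq_matI) (auto simp: less_Suc_eq)
  have "detn (Suc k) N = Determinant.det ?A1 * Determinant.det ?A4"
    unfolding detn_eq_det blocks by (rule det_four_block_mat_lower_left_zero) auto
  also have "Determinant.det ?A4 = N k k"
    by (subst det_single) auto
  finally show ?thesis by (simp add: detn_eq_det)
qed

lemma abs_detn_orthogonal:
  assumes "\<And>i j. i < k \<Longrightarrow> j < k \<Longrightarrow> (\<Sum>m<k. P m i * P m j) = (if i = j then 1 else (0::real))"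
  shows "\<bar>detn k P\<bar> = 1"
proof -
  let ?P = "Matrix.mat k k (\<lambda>(i, j). P i j)"
  have P: "?P \<in> carrier_mat k k" and "transpose_mat ?P \<in> carrier_mat k k"
    by auto
  moreover have "transpose_mat ?P * ?P = 1\<^sub>m k"
    using assms by (intro eq_matI) (auto simp: scalar_prod_def lessThan_atLeast0)
  ultimately have "Determinant.det ?P * Determinant.det ?P = 1"
    using det_mult det_one det_transpose[OF P] by metis
  then have "(detn k P)\<^sup>2 = 1"
    by (simp add: detn_eq_det power2_eq_square)
  then have "detn k P = 1 \<or> detn k P = -1"
    by (simp add: power2_eq_1_iff)
  then show ?thesis
    by auto
qed

lemma detn_eq_0_imp_kernel:
  assumes "detn k M = 0"
  obtains v j where "v j \<noteq> 0" "j < k" "\<And>i. i < k \<Longrightarrow> (\<Sum>j<k. M i j * v j) = 0"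
proof -
  let ?M = "Matrix.mat k k (\<lambda>(i, j). M i j)"
  obtain v where v: "v \<in> carrier_vec k" "v \<noteq> 0\<^sub>v k" "?M *\<^sub>v v = 0\<^sub>v k"
    using assms det_0_iff_vec_prod_zero_field[of ?M k] by (auto simp: detn_eq_det)
  have "\<exists>j<k. vec_index v j \<noteq> 0"
  proof (rule ccontr)
    assume "\<not> (\<exists>j<k. vec_index v j \<noteq> 0)"
    then have "v = 0\<^sub>v k"
      using v(1) by (intro eq_vecI) auto
    with v(2) show False ..
  qed
  then obtain j where "j < k" "vec_index v j \<noteq> 0"
    by blast
  moreover have "(\<Sum>j<k. M i j * vec_index v j) = 0" if "i < k" for i
  proof -
    have "vec_index (?M *\<^sub>v v) i = 0"
      using v(3) that by simp
    then show ?thesis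
      using that v(1) by (simp add: scalar_prod_def lessThan_atLeast0)
  qed
  ultimately show ?thesis
    using that by blast
qed

subsection \<open>Orthonormal bases indexed by natural numbers\<close>

definition is_onb :: "'a::euclidean_space set \<Rightarrow> nat \<Rightarrow> (nat \<Rightarrow> 'a) \<Rightarrow> bool" where
  "is_onb V k b \<longleftrightarrow> (\<forall>i<k. b i \<in> V) \<and>
      (\<forall>i<k. \<forall>j<k. b i \<bullet> b j = (if i = j then 1 else 0)) \<and> span (b ` {..<k}) = span V"

lemma is_onb_onb:
  fixes V :: "'a::euclidean_space set"
  assumes "subspace V"
  shows "is_onb V (dim V) (onb V)"
proof -
  obtain B where B: "B \<subseteq> V" "pairwise orthogonal B" "\<And>x. x \<in> B \<Longrightarrow> norm x = 1"
      "independent B" "card B = dim V" "span B = V"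
    using orthonormal_basis_subspace[OF assms] by metis
  obtain h where "bij_betw h {0..<card B} B"
    using ex_bij_betw_nat_finite[OF finiteI_independent[OF B(4)]] by blast
  then have hB: "h ` {..<dim V} = B" and inj: "inj_on h {..<dim V}"
    using B(5) by (simp_all add: bij_betw_def lessThan_atLeast0)
  have "h i \<bullet> h j = (if i = j then 1 else 0)" if "i < dim V" "j < dim V" for i j
  proof (cases "i = j")
    case True
    then show ?thesis using B(3) hB that by (auto simp: norm_eq_1)
  next
    case False
    then have "h i \<noteq> h j" using inj that by (meson inj_on_eq_iff lessThan_iff)
    then show ?thesis using B(2) hB that False by (auto simp: pairwise_def orthogonal_def)
  qed
  moreover have "span V = V"
    using assms by (rule span_eq_iff[THEN iffD2])
  ultimately have "is_onb V (dim V) h"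
    unfolding is_onb_def using hB B(1,6) by blast
  then show ?thesis
    unfolding onb_def is_onb_def[symmetric] by (rule someI[of "\<lambda>b. is_onb V (dim V) b"])
qed

lemma is_onb_expansion:
  assumes "is_onb V k b" "x \<in> span V"
  shows "x = (\<Sum>i<k. (b i \<bullet> x) *\<^sub>R b i)"
proof -
  have basis: "(\<Sum>i<k. (b i \<bullet> b j) *\<^sub>R b i) = b j" if "j < k" for j
  proof -
    have "(\<Sum>i<k. (b i \<bullet> b j) *\<^sub>R b i) = (\<Sum>i<k. if i = j then b i else 0)"
      using assms(1) that unfolding is_onb_def by (intro sum.cong) auto
    then show ?thesis
      using that by simp
  qed
  have "x \<in> span (b ` {..<k})"
    using assms unfolding is_onb_def by auto
  then show ?thesis
  proof (induction rule: span_induct_alt)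
    case (step c z w)
    then have z: "(\<Sum>i<k. (b i \<bullet> z) *\<^sub>R b i) = z"
      using basis by auto
    have "(\<Sum>i<k. (b i \<bullet> (c *\<^sub>R z + w)) *\<^sub>R b i) =
        c *\<^sub>R (\<Sum>i<k. (b i \<bullet> z) *\<^sub>R b i) + (\<Sum>i<k. (b i \<bullet> w) *\<^sub>R b i)"
      by (simp add: inner_add_right scaleR_add_left sum.distrib scaleR_sum_right)
    then show ?case
      using z step.IH[symmetric] by simp
  qed simp
qed

lemma inner_is_onb_expansion:
  assumes "is_onb V k b" "x \<in> span V"
  shows "u \<bullet> x = (\<Sum>i<k. (u \<bullet> b i) * (b i \<bullet> x))"
  by (subst is_onb_expansion[OF assms]) (simp add: inner_sum_right mult.commute)

lemma is_onbI:
  fixes V :: "'a::euclidean_space set"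
  assumes "subspace V" "dim V = k" "\<And>i. i < k \<Longrightarrow> b i \<in> V"
    and orthonormal: "\<And>i j. i < k \<Longrightarrow> j < k \<Longrightarrow> b i \<bullet> b j = (if i = j then 1 else 0)"
  shows "is_onb V k b"
proof -
  have "inj_on b {..<k}"
  proof (rule inj_onI)
    fix i j assume "i \<in> {..<k}" "j \<in> {..<k}" "b i = b j"
    then show "i = j"
      using orthonormal[of i j] orthonormal[of j j] by (auto split: if_splits)
  qed
  then have card: "card (b ` {..<k}) = dim V"
    using card_image assms(2) by fastforce
  have "independent (b ` {..<k})"
  proof (rule pairwise_orthogonal_independent)
    show "pairwise orthogonal (b ` {..<k})"
      using orthonormal by (auto simp: pairwise_def orthogonal_def)
    show "0 \<notin> b ` {..<k}"
      using orthonormal by force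
  qed
  then have "V \<subseteq> span (b ` {..<k})"
    using card_eq_dim[OF _ card] assms(3) by blast
  moreover have "b ` {..<k} \<subseteq> V"
    using assms(3) by blast
  ultimately have "span (b ` {..<k}) = span V"
    by (metis span_mono span_span subset_antisym)
  then show ?thesis
    unfolding is_onb_def using assms(3) orthonormal by blast
qed

lemma is_onb_extend:
  fixes V :: "'a::euclidean_space set"
  assumes "subspace V" "dim V = Suc k" "is_onb U k b" "U \<subseteq> V" "u \<in> V" "norm u = 1"
    and "\<And>i. i < k \<Longrightarrow> b i \<bullet> u = 0"
  shows "is_onb V (Suc k) (b(k := u))"
proof (rule is_onbI[OF assms(1,2)])
  show "(b(k := u)) i \<in> V" if "i < Suc k" for i
    using assms(3-5) that unfolding is_onb_def by (auto simp: less_Suc_eq)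
  have "u \<bullet> u = 1"
    using assms(6) by (simp add: norm_eq_1)
  then show "(b(k := u)) i \<bullet> (b(k := u)) j = (if i = j then 1 else 0)"
    if "i < Suc k" "j < Suc k" for i j
    using assms(3,7) that unfolding is_onb_def by (auto simp: less_Suc_eq inner_commute)
qed

lemma abs_detn_change_of_onb:
  assumes "is_onb V k b" "is_onb V k e"
  shows "\<bar>detn k (\<lambda>i j. e i \<bullet> b j)\<bar> = 1"
proof (rule abs_detn_orthogonal)
  fix i j assume "i < k" "j < k"
  then have "b j \<in> span V" "b i \<bullet> b j = (if i = j then 1 else 0)"
    using assms(1) unfolding is_onb_def by (auto intro: span_base)
  then show "(\<Sum>m<k. (e m \<bullet> b i) * (e m \<bullet> b j)) = (if i = j then 1 else 0)"
    using inner_is_onb_expansion[OF assms(2)] by (simp add: inner_commute)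
qed

subsection \<open>Determinants of restricted linear maps\<close>

lemma abs_detn_onb_invariant:
  assumes "linear f" "is_onb V k b" "is_onb V k e" "is_onb W k c" "is_onb W k d"
    and "f ` V \<subseteq> span W"
  shows "\<bar>detn k (\<lambda>i j. c i \<bullet> f (b j))\<bar> = \<bar>detn k (\<lambda>i j. d i \<bullet> f (e j))\<bar>"
proof -
  have fb: "f (b j) \<in> span W" and fb_eq: "f (b j) = (\<Sum>m<k. (e m \<bullet> b j) *\<^sub>R f (e m))"
    if "j < k" for j
  proof -
    have "b j \<in> span V"
      using assms(2) that unfolding is_onb_def by (auto intro: span_base)
    then show "f (b j) = (\<Sum>m<k. (e m \<bullet> b j) *\<^sub>R f (e m))"
      by (subst is_onb_expansion[OF assms(3)])
        (simp_all add: linear_sum[OF assms(1)] linear_scale[OF assms(1)])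
    show "f (b j) \<in> span W"
      using assms(2,6) that unfolding is_onb_def by blast
  qed
  have "detn k (\<lambda>i j. c i \<bullet> f (b j)) = detn k (\<lambda>i j. \<Sum>l<k. (c i \<bullet> d l) * (d l \<bullet> f (b j)))"
    using inner_is_onb_expansion[OF assms(5) fb] by (intro detn_cong) simp
  also have "\<dots> = detn k (\<lambda>i j. c i \<bullet> d j) * detn k (\<lambda>i j. d i \<bullet> f (b j))"
    by (rule detn_mult)
  also have "detn k (\<lambda>i j. d i \<bullet> f (b j)) =
      detn k (\<lambda>i j. \<Sum>m<k. (d i \<bullet> f (e m)) * (e m \<bullet> b j))"
    using fb_eq by (intro detn_cong) (simp add: inner_sum_right mult.commute)
  also have "\<dots> = detn k (\<lambda>i j. d i \<bullet> f (e j)) * detn k (\<lambda>i j. e i \<bullet> b j)"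
    by (rule detn_mult)
  finally show ?thesis
    using abs_detn_change_of_onb[OF assms(5,4)] abs_detn_change_of_onb[OF assms(2,3)]
    by (simp add: abs_mult)
qed

lemma detn_onb_nonzero:
  assumes "linear f" "is_onb V k b" "is_onb W k c" "f ` V \<subseteq> span W"
    and inj: "\<And>x. x \<in> span V \<Longrightarrow> f x = 0 \<Longrightarrow> x = 0"
  shows "detn k (\<lambda>i j. c i \<bullet> f (b j)) \<noteq> 0"
proof
  assume "detn k (\<lambda>i j. c i \<bullet> f (b j)) = 0"
  then obtain v j where j: "v j \<noteq> 0" "j < k"
    and v: "\<And>i. i < k \<Longrightarrow> (\<Sum>j<k. (c i \<bullet> f (b j)) * v j) = 0"
    by (rule detn_eq_0_imp_kernel) blast
  define x where "x = (\<Sum>j<k. v j *\<^sub>R b j)"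
  have bV: "b j \<in> V" if "j < k" for j
    using assms(2) that unfolding is_onb_def by auto
  have fx: "f x = (\<Sum>j<k. v j *\<^sub>R f (b j))"
    unfolding x_def by (simp add: linear_sum[OF assms(1)] linear_scale[OF assms(1)])
  have "f x \<in> span W"
    unfolding fx using assms(4) bV by (intro span_sum span_scale) auto
  then have "f x = (\<Sum>i<k. (c i \<bullet> f x) *\<^sub>R c i)"
    by (rule is_onb_expansion[OF assms(3)])
  also have "\<dots> = 0"
    using v by (simp add: fx inner_sum_right mult.commute)
  finally have "f x = 0" .
  moreover have "x \<in> span V"
    unfolding x_def using bV by (intro span_sum span_scale span_base) auto
  ultimately have "x = 0"
    using inj by blast
  moreover have "b j \<bullet> x = v j"
  proof -
    have "b j \<bullet> x = (\<Sum>m<k. if m = j then v m else 0)"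
      unfolding x_def inner_sum_right using assms(2) j(2)
      by (intro sum.cong) (auto simp: is_onb_def)
    then show ?thesis
      using j(2) by simp
  qed
  ultimately show False
    using j(1) by simp
qed

lemma abs_det_restr_eq_detn:
  assumes "linear f" "subspace V" "subspace W" "dim V = k" "dim W = k"
    and "is_onb V k b" "is_onb W k c" "f ` V \<subseteq> W"
  shows "abs_det_restr f V W = \<bar>detn k (\<lambda>i j. c i \<bullet> f (b j))\<bar>"
proof -
  have "is_onb V k (onb V)" "is_onb W k (onb W)"
    using is_onb_onb[OF assms(2)] is_onb_onb[OF assms(3)] assms(4,5) by simp_all
  moreover have "f ` V \<subseteq> span W"
    using assms(8) span_superset by blast
  ultimately show ?thesis
    unfolding abs_det_restr_def assms(4) using abs_detn_onb_invariant assms(1,6,7) by metis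
qed

lemma abs_det_restr_nonzero:
  assumes "linear f" "subspace V" "subspace W" "dim V = dim W" "f ` V \<subseteq> W" "inj_on f V"
  shows "abs_det_restr f V W \<noteq> 0"
proof -
  have "x = 0" if "x \<in> span V" "f x = 0" for x
  proof (rule inj_onD[OF assms(6)])
    show "x \<in> V"
      using that(1) span_minimal[OF subset_refl assms(2)] by blast
    show "0 \<in> V"
      using assms(2) by (rule subspace_0)
    show "f x = f 0"
      using that(2) linear_0[OF assms(1)] by simp
  qed
  moreover have "is_onb V (dim W) (onb V)"
    using is_onb_onb[OF assms(2)] assms(4) by simp
  moreover have "f ` V \<subseteq> span W"
    using assms(5) span_superset by blast
  ultimately show ?thesis
    unfolding abs_det_restr_def assms(4)
    using detn_onb_nonzero[OF assms(1)] is_onb_onb[OF assms(3)] by simp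
qed

lemma perp_part:
  fixes W :: "'a::euclidean_space set"
  assumes "subspace W"
  shows "perp_part W x \<in> orthogonal_comp W" "x - perp_part W x \<in> W"
proof -
  obtain a z where az: "a \<in> span W" "\<And>w. w \<in> span W \<Longrightarrow> orthogonal z w" "x = a + z"
    using orthogonal_subspace_decomp_exists[of W x] by metis
  have z: "z \<in> orthogonal_comp W \<and> x - z \<in> W"
    using az span_superset[of W] span_minimal[OF subset_refl assms]
    by (auto simp: orthogonal_comp_def orthogonal_def inner_commute)
  moreover have "z' = z" if "z' \<in> orthogonal_comp W \<and> x - z' \<in> W" for z'
  proof -
    have "x - z \<in> W" "x - z' \<in> W"
      using z that by simp_all
    then have "(x - z) - (x - z') \<in> W"
      by (rule subspace_diff[OF assms])
    then have "z' - z \<in> W"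
      by simp
    moreover have "z' \<in> orthogonal_comp W" "z \<in> orthogonal_comp W"
      using z that by simp_all
    then have "z' - z \<in> orthogonal_comp W"
      by (rule subspace_diff[OF subspace_orthogonal_comp])
    ultimately have "z' - z \<in> W \<inter> orthogonal_comp W"
      by blast
    then show ?thesis
      unfolding orthogonal_Int_0[OF assms] by simp
  qed
  ultimately have "perp_part W x = z"
    unfolding perp_part_def by (rule the_equality)
  with z show "perp_part W x \<in> orthogonal_comp W" "x - perp_part W x \<in> W"
    by simp_all
qed

lemma dim_orthogonal_comp:
  fixes S :: "'a::euclidean_space set"
  assumes "subspace S"
  shows "dim (orthogonal_comp S) + dim S = DIM('a)"
proof -
  have "{x \<in> UNIV. \<forall>z\<in>S. orthogonal z x} = orthogonal_comp S"
    by (auto simp: orthogonal_comp_def)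
  then show ?thesis
    using dim_subspace_orthogonal_to_vectors[OF assms subspace_UNIV subset_UNIV] by simp
qed

subsection \<open>Surjective linear maps and the hyperplane orthogonal to a unit vector\<close>

locale surj_linear =
  fixes f :: "'a::euclidean_space \<Rightarrow> 'b::euclidean_space"
  assumes linear: "linear f" and surj: "surj f"
begin

definition ker_perp :: "'a set" where
  "ker_perp = orthogonal_comp {x. f x = 0}"

lemma subspace_ker: "subspace {x. f x = 0}"
  using linear by (rule linear_subspace_kernel)

lemma subspace_ker_perp: "subspace ker_perp"
  unfolding ker_perp_def by (rule subspace_orthogonal_comp)

lemma ker_perp_eq_0: "x \<in> ker_perp \<Longrightarrow> f x = 0 \<Longrightarrow> x = 0"
  using orthogonal_Int_0[OF subspace_ker] unfolding ker_perp_def by blast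

lemma inj_on_ker_perp: "inj_on f ker_perp"
proof (rule inj_onI)
  fix a b assume "a \<in> ker_perp" "b \<in> ker_perp" "f a = f b"
  then have "a - b \<in> ker_perp" "f (a - b) = 0"
    using subspace_diff[OF subspace_ker_perp] linear_diff[OF linear] by simp_all
  then have "a - b = 0"
    by (rule ker_perp_eq_0)
  then show "a = b"
    by simp
qed

lemma image_ker_perp: "f ` ker_perp = UNIV"
proof -
  have "f x \<in> f ` ker_perp" for x
  proof -
    obtain a b where "a \<in> {x. f x = 0}" "b \<in> ker_perp" "x = a + b"
      using subspace_sum_orthogonal_comp[OF subspace_ker] unfolding ker_perp_def
      by (metis UNIV_I set_plus_elim)
    then show ?thesis
      using linear_add[OF linear] by simp
  qed
  then show ?thesis
    using surj by (metis UNIV_eq_I surjD)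
qed

lemma dim_ker_perp: "dim ker_perp = DIM('b)"
proof -
  have "inj_on f (span ker_perp)"
    unfolding span_eq_iff[THEN iffD2, OF subspace_ker_perp] by (rule inj_on_ker_perp)
  then have "dim (f ` ker_perp) = dim ker_perp"
    by (rule dim_image_eq[OF linear])
  then show ?thesis
    unfolding image_ker_perp by simp
qed

end

locale surj_linear_unit = surj_linear +
  fixes y :: 'a
  assumes y_in_ker_perp: "y \<in> ker_perp" and norm_y: "norm y = 1"
begin

definition H :: "'a set" where
  "H = orthogonal_comp (span ({y} \<union> {x. f x = 0}))"

definition W :: "'b set" where
  "W = f ` H"

definition p :: 'b where
  "p = perp_part W (f y)"

lemma subspace_H: "subspace H"
  unfolding H_def by (rule subspace_orthogonal_comp)

lemma H_subset_ker_perp: "H \<subseteq> ker_perp"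
  unfolding H_def ker_perp_def
  by (intro orthogonal_comp_anti_mono) (meson Un_upper2 span_superset subset_trans)

lemma inner_y_H: "u \<in> H \<Longrightarrow> y \<bullet> u = 0"
  unfolding H_def orthogonal_comp_def orthogonal_def by (simp add: span_base)

lemma dim_H: "Suc (dim H) = DIM('b)"
proof -
  have "y \<noteq> 0"
    using norm_y by auto
  then have "y \<notin> span {x. f x = 0}"
    unfolding span_eq_iff[THEN iffD2, OF subspace_ker] using ker_perp_eq_0 y_in_ker_perp by blast
  then have "dim (span ({y} \<union> {x. f x = 0})) = Suc (dim {x. f x = 0})"
    by (simp add: dim_insert)
  moreover have "dim H + dim (span ({y} \<union> {x. f x = 0})) = DIM('a)"
    unfolding H_def by (rule dim_orthogonal_comp) simp
  moreover have "dim ker_perp + dim {x. f x = 0} = DIM('a)"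
    unfolding ker_perp_def by (rule dim_orthogonal_comp[OF subspace_ker])
  ultimately show ?thesis
    using dim_ker_perp by simp
qed

lemma subspace_W: "subspace W"
  unfolding W_def by (rule linear_subspace_image[OF linear subspace_H])

lemma dim_W: "dim W = dim H"
proof -
  have "inj_on f (span H)"
    unfolding span_eq_iff[THEN iffD2, OF subspace_H]
    using inj_on_ker_perp H_subset_ker_perp by (rule inj_on_subset)
  then show ?thesis
    unfolding W_def by (rule dim_image_eq[OF linear])
qed

lemma p_orthogonal_W: "w \<in> W \<Longrightarrow> w \<bullet> p = 0"
  using perp_part(1)[OF subspace_W] unfolding p_def orthogonal_comp_def orthogonal_def by blast

lemma f_y_minus_p: "f y - p \<in> W"
  unfolding p_def by (rule perp_part(2)[OF subspace_W])

lemma p_nonzero: "p \<noteq> 0"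
proof
  assume "p = 0"
  then obtain u where u: "u \<in> H" "f y = f u"
    using f_y_minus_p unfolding W_def by auto
  then have "y = u"
    using inj_on_ker_perp H_subset_ker_perp y_in_ker_perp by (auto dest: inj_onD)
  then show False
    using inner_y_H[OF u(1)] norm_y by simp
qed

lemma inner_p_f_y: "p \<bullet> f y = p \<bullet> p"
proof -
  have "p \<bullet> f y = p \<bullet> (f y - p) + p \<bullet> p"
    by (simp add: inner_diff_right)
  then show ?thesis
    using p_orthogonal_W[OF f_y_minus_p] by (simp add: inner_commute)
qed

lemma orthogonal_comp_W: "orthogonal_comp W = span {p}"
proof (rule sym, rule subspace_dim_equal)
  show "span {p} \<subseteq> orthogonal_comp W"
    using p_orthogonal_W
    by (intro span_minimal subspace_orthogonal_comp) (auto simp: orthogonal_comp_def orthogonal_def)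
  show "dim (orthogonal_comp W) \<le> dim (span {p})"
    using dim_orthogonal_comp[OF subspace_W] dim_W dim_H p_nonzero by simp
qed (simp_all add: subspace_orthogonal_comp)

lemma abs_det_restr_ker_perp: "abs_det_restr f ker_perp UNIV = abs_det_restr f H W * norm p"
proof -
  define k where "k = dim H"
  define e where "e = (onb H)(k := y)"
  define d where "d = (onb W)(k := sgn p)"
  have bH: "is_onb H k (onb H)"
    unfolding k_def by (rule is_onb_onb[OF subspace_H])
  have cW: "is_onb W k (onb W)"
    unfolding k_def dim_W[symmetric] by (rule is_onb_onb[OF subspace_W])
  have last_row: "sgn p \<bullet> f (onb H j) = 0" if "j < k" for j
  proof -
    have "f (onb H j) \<in> W"
      using bH that unfolding is_onb_def W_def by blast
    then have "f (onb H j) \<bullet> p = 0"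
      by (rule p_orthogonal_W)
    then show ?thesis
      by (simp add: sgn_div_norm inner_commute)
  qed
  have "is_onb ker_perp (Suc k) e"
    unfolding e_def
  proof (rule is_onb_extend[OF subspace_ker_perp _ bH H_subset_ker_perp y_in_ker_perp norm_y])
    show "dim ker_perp = Suc k"
      using dim_ker_perp dim_H by (simp add: k_def)
    show "onb H i \<bullet> y = 0" if "i < k" for i
      using inner_y_H[of "onb H i"] bH that unfolding is_onb_def by (simp add: inner_commute)
  qed
  moreover have "is_onb UNIV (Suc k) d"
    unfolding d_def
  proof (rule is_onb_extend[OF subspace_UNIV _ cW subset_UNIV UNIV_I])
    show "dim (UNIV :: 'b set) = Suc k"
      using dim_H by (simp add: k_def)
    show "norm (sgn p) = 1"
      using p_nonzero by (simp add: norm_sgn)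
    show "onb W i \<bullet> sgn p = 0" if "i < k" for i
      using cW that p_orthogonal_W unfolding is_onb_def by (simp add: sgn_div_norm)
  qed
  moreover have "f ` ker_perp \<subseteq> UNIV"
    by simp
  ultimately have "abs_det_restr f ker_perp UNIV = \<bar>detn (Suc k) (\<lambda>i j. d i \<bullet> f (e j))\<bar>"
    using dim_ker_perp dim_H
    by (intro abs_det_restr_eq_detn[OF linear subspace_ker_perp subspace_UNIV]) (simp_all add: k_def)
  also have "detn (Suc k) (\<lambda>i j. d i \<bullet> f (e j)) = detn k (\<lambda>i j. d i \<bullet> f (e j)) * (sgn p \<bullet> f y)"
    using last_row by (subst detn_last_row_zero) (simp_all add: d_def e_def)
  also have "detn k (\<lambda>i j. d i \<bullet> f (e j)) = detn k (\<lambda>i j. onb W i \<bullet> f (onb H j))"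
    by (rule detn_cong) (simp add: d_def e_def)
  also have "sgn p \<bullet> f y = norm p"
    using inner_p_f_y p_nonzero
    by (simp add: sgn_div_norm power2_norm_eq_inner[symmetric] power2_eq_square)
  finally show ?thesis
    unfolding abs_det_restr_def k_def by (simp add: abs_mult)
qed

lemma abs_det_restr_ratio:
  "\<bar>abs_det_restr f H W / abs_det_restr f ker_perp UNIV\<bar> = 1 / norm p"
proof -
  have "abs_det_restr f H W \<noteq> 0"
    using inj_on_ker_perp H_subset_ker_perp dim_W
    by (intro abs_det_restr_nonzero[OF linear subspace_H subspace_W])
      (auto simp: W_def inj_on_subset)
  then show ?thesis
    unfolding abs_det_restr_ker_perp using p_nonzero by (simp add: abs_det_restr_def)
qed

lemma norm_adjoint_preimage:
  assumes adjoint: "\<And>x. v \<bullet> f x = y \<bullet> x"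
  shows "norm v = 1 / norm p"
proof -
  have "v \<in> orthogonal_comp W"
    using adjoint inner_y_H unfolding W_def orthogonal_comp_def orthogonal_def
    by (auto simp: inner_commute)
  then obtain c where v: "v = c *\<^sub>R p"
    unfolding orthogonal_comp_W by (auto simp: span_singleton)
  have "(f y - p) \<bullet> v = 0"
    using \<open>v \<in> orthogonal_comp W\<close> f_y_minus_p
    unfolding orthogonal_comp_def orthogonal_def by blast
  then have "v \<bullet> p = v \<bullet> f y"
    by (simp add: inner_diff inner_commute)
  also have "\<dots> = 1"
    using adjoint[of y] norm_y by (simp add: norm_eq_1)
  finally have "c * (norm p)\<^sup>2 = 1"
    by (simp add: v power2_norm_eq_inner)
  then have "c = 1 / (norm p)\<^sup>2"
    using p_nonzero by (simp add: field_simps)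
  then show ?thesis
    using p_nonzero by (simp add: v power2_eq_square)
qed

end

lemma surj_linear_matrix_vector_mult:
  fixes A :: "real^'n^'s"
  assumes "rank A = CARD('s)"
  shows "surj_linear ((*v) A)"
  using assms by (simp add: surj_linear_def full_rank_surjective matrix_vector_mul_linear)

lemma matrix_inv_mult_left:
  assumes "invertible M"
  shows "matrix_inv M ** M = Finite_Cartesian_Product.mat 1"
  using someI_ex[OF assms[unfolded invertible_def]] unfolding matrix_inv_def by blast

lemma invertible_mult_transpose:
  fixes A :: "real^'n^'s"
  assumes "rank A = CARD('s)"
  shows "invertible (A ** transpose A)"
  unfolding invertible_left_inverse matrix_left_invertible_ker
proof (intro allI impI)
  fix w assume "(A ** transpose A) *v w = 0"
  then have "(w v* A) \<bullet> (w v* A) = 0"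
    by (simp add: dot_lmul_matrix matrix_vector_mul_assoc[symmetric])
  then have wA: "w v* A = 0"
    by simp
  obtain x where "w = A *v x"
    using assms full_rank_surjective by (metis surjD)
  then have "w \<bullet> w = (w v* A) \<bullet> x"
    by (simp add: dot_lmul_matrix)
  then show "w = 0"
    using wA by simp
qed

lemma transpose_mult_transpose_pinv:
  fixes A :: "real^'n^'s"
  assumes "rank A = CARD('s)" and "y \<in> orthogonal_comp (mat_ker A)"
  shows "transpose A *v (transpose (pinv A) *v y) = y"
proof -
  interpret surj_linear "(*v) A"
    using assms(1) by (rule surj_linear_matrix_vector_mult)
  define G where "G = A ** transpose A"
  define v where "v = transpose (pinv A) *v y"
  have "transpose A *v v = (A *v y) v* (matrix_inv G ** A)"
    by (simp add: v_def pinv_def G_def matrix_mul_assoc vector_matrix_mul_assoc[symmetric])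
  then have "A *v (transpose A *v v) = ((A *v y) v* (matrix_inv G ** A)) v* transpose A"
    by simp
  also have "\<dots> = (A *v y) v* (matrix_inv G ** G)"
    by (simp only: vector_matrix_mul_assoc matrix_mul_assoc G_def)
  also have "\<dots> = A *v y"
    using matrix_inv_mult_left[OF invertible_mult_transpose[OF assms(1)]] by (simp add: G_def)
  finally have "A *v (transpose A *v v - y) = 0"
    by (simp add: matrix_vector_mult_diff_distrib)
  moreover have "transpose A *v v \<in> ker_perp"
    unfolding ker_perp_def orthogonal_comp_def orthogonal_def
  proof (intro CollectI ballI)
    fix z assume "z \<in> {x. A *v x = 0}"
    moreover have "(v v* A) \<bullet> z = v \<bullet> (A *v z)"
      by (rule dot_lmul_matrix)
    ultimately show "z \<bullet> (transpose A *v v) = 0"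
      by (simp add: inner_commute)
  qed
  then have "transpose A *v v - y \<in> ker_perp"
    using assms(2) subspace_diff[OF subspace_ker_perp] by (simp add: ker_perp_def mat_ker_def)
  ultimately have "transpose A *v v - y = 0"
    by (intro ker_perp_eq_0)
  then show ?thesis
    by (simp add: v_def)
qed

theorem lemma3p13:
  fixes A :: "real^'n^'s" and y :: "real^'n"
  assumes "CARD('s) \<le> CARD('n)"
    and "rank A = CARD('s)"
    and "y \<in> orthogonal_comp (mat_ker A)"
    and "norm y = 1"
  shows "norm (transpose (pinv A) *v y) =
           \<bar>abs_det_restr (\<lambda>x. A *v x) (orthogonal_comp (span ({y} \<union> mat_ker A)))
                ((\<lambda>x. A *v x) ` orthogonal_comp (span ({y} \<union> mat_ker A)))
            / abs_det_restr (\<lambda>x. A *v x) (orthogonal_comp (mat_ker A)) (UNIV :: (real^'s) set)\<bar>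
       \<and> norm (transpose (pinv A) *v y) =
           1 / norm (perp_part ((\<lambda>x. A *v x) ` orthogonal_comp (span ({y} \<union> mat_ker A))) (A *v y))"
proof -
  interpret surj_linear_unit "(*v) A" y
    using surj_linear_matrix_vector_mult[OF assms(2)] assms(3,4)
    by (simp add: surj_linear_unit_def surj_linear_unit_axioms_def surj_linear.ker_perp_def
        mat_ker_def)
  have "(transpose (pinv A) *v y) \<bullet> (A *v x) = y \<bullet> x" for x
    using transpose_mult_transpose_pinv[OF assms(2,3)] by (simp add: dot_lmul_matrix[symmetric])
  then have "norm (transpose (pinv A) *v y) = 1 / norm p"
    by (rule norm_adjoint_preimage)
  then show ?thesis
    using abs_det_restr_ratio unfolding H_def W_def p_def ker_perp_def mat_ker_def by simp
qed

end
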